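(* Let $a<b$, let $N\ge1$ and $T\ge1$. For a probability distribution function $F$ on $[a,b]$ and $y\in[a,b]$ let $\mathrm{CRPS}(F,y)=\int_a^b(F(u)-H(u-y))^2\,du$, where $H(x)=0$ for $x<0$ and $H(x)=1$ for $x\ge0$. Consider the online protocol: set $w_{i,1}=\frac1N$ for $1\le i\le N$; for $t=1,\dots,T$: experts $i=1,\dots,N$ announce probability distribution functions $F_{i,t}$ on $[a,b]$; the learner announces $$F_t(u)=\frac12-\frac14\ln\frac{\sum_{i=1}^N w^*_{i,t}e^{-2(F_{i,t}(u))^2}}{\sum_{i=1}^N w^*_{i,t}e^{-2(1-F_{i,t}(u))^2}},\qquad w^*_{i,t}=\frac{w_{i,t}}{\sum_{j=1}^N w_{j,t}};$$ an outcome $y_t\in[a,b]$ is revealed (arbitrarily, possibly adversarially); and the weights are updated by $w_{i,t+1}=w_{i,t}\,e^{-\frac{2}{b-a}\mathrm{CRPS}(F_{i,t},y_t)}$. Then for every $1\le i\le N$, $$\sum_{t=1}^T\mathrm{CRPS}(F_t,y_t)\le\sum_{t=1}^T\mathrm{CRPS}(F_{i,t},y_t)+\frac{b-a}{2}\ln N.$$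
   Context: A probability distribution function on $[a,b]$ is a non-decreasing function $F:[a,b]\to[0,1]$ with $F(a)=0$, $F(b)=1$, left-continuous and having a right limit at each point. *)

theory Defs
  imports "HOL-Analysis.Analysis"
begin

definition pdf_on :: "real \<Rightarrow> real \<Rightarrow> (real \<Rightarrow> real) \<Rightarrow> bool" where
  "pdf_on a b F \<longleftrightarrow>
     mono_on {a..b} F \<and>
     (\<forall>u\<in>{a..b}. 0 \<le> F u \<and> F u \<le> 1) \<and>
     F a = 0 \<and> F b = 1 \<and>
     (\<forall>x\<in>{a..b}. (F \<longlongrightarrow> F x) (at x within {a..<x})) \<and>
     (\<forall>x\<in>{a..b}. \<exists>L. (F \<longlongrightarrow> L) (at x within {x<..b}))"

definition heaviside :: "real \<Rightarrow> real" where
  "heaviside x = (if x < 0 then 0 else 1)"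

definition CRPS :: "real \<Rightarrow> real \<Rightarrow> (real \<Rightarrow> real) \<Rightarrow> real \<Rightarrow> real" where
  "CRPS a b F y = integral {a..b} (\<lambda>u. (F u - heaviside (u - y))\<^sup>2)"

text \<open>Weights w_{i,t} of the protocol, for t \<ge> 1 (the value at t = 0 is irrelevant).
  F i t is the forecast of expert i at step t, y t the outcome at step t.\<close>
fun weight :: "real \<Rightarrow> real \<Rightarrow> nat \<Rightarrow> (nat \<Rightarrow> nat \<Rightarrow> real \<Rightarrow> real) \<Rightarrow> (nat \<Rightarrow> real)
    \<Rightarrow> nat \<Rightarrow> nat \<Rightarrow> real" where
  "weight a b N F y i 0 = 1 / real N"
| "weight a b N F y i (Suc 0) = 1 / real N"
| "weight a b N F y i (Suc (Suc t)) =
     weight a b N F y i (Suc t) * exp (- (2 / (b - a)) * CRPS a b (F i (Suc t)) (y (Suc t)))"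

definition nweight :: "real \<Rightarrow> real \<Rightarrow> nat \<Rightarrow> (nat \<Rightarrow> nat \<Rightarrow> real \<Rightarrow> real) \<Rightarrow> (nat \<Rightarrow> real)
    \<Rightarrow> nat \<Rightarrow> nat \<Rightarrow> real" where
  "nweight a b N F y i t = weight a b N F y i t / (\<Sum>j=1..N. weight a b N F y j t)"

definition learner :: "real \<Rightarrow> real \<Rightarrow> nat \<Rightarrow> (nat \<Rightarrow> nat \<Rightarrow> real \<Rightarrow> real) \<Rightarrow> (nat \<Rightarrow> real)
    \<Rightarrow> nat \<Rightarrow> real \<Rightarrow> real" where
  "learner a b N F y t u =
     1/2 - 1/4 * ln ((\<Sum>i=1..N. nweight a b N F y i t * exp (-2 * (F i t u)\<^sup>2))
                   / (\<Sum>i=1..N. nweight a b N F y i t * exp (-2 * (1 - F i t u)\<^sup>2)))"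

end

theory Submission
  imports Defs "HOL-Probability.Hoeffding"
begin

(* Pointwise in u, the learner's forecast is Vovk's substitution function for the square loss
   with learning rate 2: Hoeffding's lemma for a two-point distribution shows that this loss
   is 2-mixable for binary outcomes, and the outcome H(u - y) is binary. Integrating over [a,b]
   turns this into mixability of the CRPS with learning rate 2/(b-a), because minus the log of an exponential
   mixture is concave in the losses and so lies below its tangent, which integrates exactly.
   Mixability makes the learner's loss at most the decrease of -(b-a)/2 ln of the total
   weight; summing telescopes, and the final total weight is at least that of any expert. *)

lemma Hoeffding_two_point:
  fixes g x :: real
  assumes "0 \<le> g" "g \<le> 1"
  shows "(1 - g) * exp (- g * x) + g * exp ((1 - g) * x) \<le> exp (x\<^sup>2 / 8)"
proof -
  have nonneg_case: "(1 - g) * exp (- g * x) + g * exp ((1 - g) * x) \<le> exp (x\<^sup>2 / 8)"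
    if "0 \<le> g" "0 \<le> x" for g x :: real
  proof -
    have pos: "0 < 1 + g * (exp x - 1)"
      using that by (intro add_pos_nonneg) auto
    have "- x * g + ln (1 + g * (exp x - 1)) \<le> x\<^sup>2 / 8"
      using Hoeffdings_lemma_aux[of x g] that by simp
    then have "ln (1 + g * (exp x - 1)) \<le> g * x + x\<^sup>2 / 8"
      by (simp add: algebra_simps)
    then have "1 + g * (exp x - 1) \<le> exp (g * x + x\<^sup>2 / 8)"
      using pos by (metis exp_le_cancel_iff exp_ln)
    then have "exp (- g * x) * (1 + g * (exp x - 1)) \<le> exp (- g * x) * exp (g * x + x\<^sup>2 / 8)"
      by simp
    then show ?thesis
      by (simp add: algebra_simps flip: exp_add)
  qed
  show ?thesis
  proof (cases "0 \<le> x")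
    case True
    then show ?thesis using nonneg_case assms by blast
  next
    case False
    then show ?thesis using nonneg_case[of "1 - g" "- x"] assms by (simp add: algebra_simps)
  qed
qed

lemma exp_square_loss_mixture_le_one:
  fixes \<gamma> s :: real
  assumes "0 \<le> \<gamma>" "\<gamma> \<le> 1"
  shows "(1 - \<gamma>) * exp (2 * \<gamma>\<^sup>2 - 2 * s\<^sup>2) + \<gamma> * exp (2 * (1 - \<gamma>)\<^sup>2 - 2 * (1 - s)\<^sup>2) \<le> 1"
proof -
  define x where "x = 4 * (s - \<gamma>)"
  have "2 * \<gamma>\<^sup>2 - 2 * s\<^sup>2 = - (x\<^sup>2 / 8) + - \<gamma> * x"
    and "2 * (1 - \<gamma>)\<^sup>2 - 2 * (1 - s)\<^sup>2 = - (x\<^sup>2 / 8) + (1 - \<gamma>) * x"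
    by (simp_all add: x_def power2_eq_square field_simps)
  note exponents = this
  have "(1 - \<gamma>) * exp (2 * \<gamma>\<^sup>2 - 2 * s\<^sup>2) + \<gamma> * exp (2 * (1 - \<gamma>)\<^sup>2 - 2 * (1 - s)\<^sup>2)
      = exp (- (x\<^sup>2 / 8)) * ((1 - \<gamma>) * exp (- \<gamma> * x) + \<gamma> * exp ((1 - \<gamma>) * x))"
    unfolding exponents exp_add by (simp add: algebra_simps)
  also have "\<dots> \<le> exp (- (x\<^sup>2 / 8)) * exp (x\<^sup>2 / 8)"
    using Hoeffding_two_point[OF assms] by simp
  also have "\<dots> = 1"
    by (simp flip: exp_add)
  finally show ?thesis .
qed

definition substitution :: "'i set \<Rightarrow> ('i \<Rightarrow> real) \<Rightarrow> ('i \<Rightarrow> real) \<Rightarrow> real" where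
  "substitution I p g = 1/2 - 1/4 * ln ((\<Sum>i\<in>I. p i * exp (-2 * (g i)\<^sup>2))
                                     / (\<Sum>i\<in>I. p i * exp (-2 * (1 - g i)\<^sup>2)))"

lemma integrable_CRPS_integrand:
  fixes f :: "real \<Rightarrow> real"
  assumes mono: "mono_on {a..b} f" and nonneg: "\<And>u. u \<in> {a..b} \<Longrightarrow> 0 \<le> f u"
  shows "(\<lambda>u. (f u - heaviside (u - y))\<^sup>2) integrable_on {a..b}"
proof -
  define h where "h u = heaviside (u - y)" for u
  have h_mono: "mono_on {a..b} h"
    by (intro mono_onI) (auto simp: h_def heaviside_def)
  have h_nonneg: "0 \<le> h u" for u
    by (simp add: h_def heaviside_def)
  have "(\<lambda>u. f u * f u) integrable_on {a..b}" "(\<lambda>u. f u * h u) integrable_on {a..b}"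
    using mono h_mono nonneg h_nonneg
    by (auto intro!: integrable_on_mono_on mono_on_mul)
  moreover have "h integrable_on {a..b}"
    using h_mono by (rule integrable_on_mono_on)
  ultimately have "(\<lambda>u. f u * f u - 2 * (f u * h u) + h u) integrable_on {a..b}"
    by (intro integrable_add integrable_diff integrable_on_mult_right)
  moreover have "f u * f u - 2 * (f u * h u) + h u = (f u - h u)\<^sup>2" for u
    by (simp add: h_def heaviside_def power2_eq_square algebra_simps)
  ultimately show ?thesis
    by (simp add: h_def)
qed

context
  fixes I :: "'i set" and p :: "'i \<Rightarrow> real"
  assumes finite_I: "finite I"
    and p_nonneg: "\<And>i. i \<in> I \<Longrightarrow> 0 \<le> p i"
    and sum_p: "sum p I = 1"
begin

lemma weighted_sum_pos:
  assumes "\<And>i. i \<in> I \<Longrightarrow> 0 < e i"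
  shows "0 < (\<Sum>i\<in>I. p i * e i)"
proof -
  have "\<not> (\<forall>i\<in>I. p i \<le> 0)"
    using sum_nonpos[of I p] sum_p by auto
  then obtain j where j: "j \<in> I" "0 < p j"
    by (auto simp: not_le)
  have "0 \<le> p i * e i" if "i \<in> I" for i
    using p_nonneg[OF that] assms[OF that] by simp
  moreover have "0 < p j * e j"
    using j assms by simp
  ultimately show ?thesis
    by (intro sum_pos2[OF finite_I j(1), of "\<lambda>i. p i * e i"])
qed

lemma substitution_bounds:
  assumes g01: "\<And>i. i \<in> I \<Longrightarrow> 0 \<le> g i \<and> g i \<le> 1"
  defines "A \<equiv> \<Sum>i\<in>I. p i * exp (-2 * (g i)\<^sup>2)"
    and "B \<equiv> \<Sum>i\<in>I. p i * exp (-2 * (1 - g i)\<^sup>2)"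
  shows "0 < A" "0 < B" "0 \<le> substitution I p g" "substitution I p g \<le> 1"
proof -
  show A: "0 < A" and B: "0 < B"
    unfolding A_def B_def by (auto intro: weighted_sum_pos)
  have ratio: "exp (-2 * (g i)\<^sup>2) = exp (2 - 4 * g i) * exp (-2 * (1 - g i)\<^sup>2)" for i
    by (simp add: power2_eq_square algebra_simps flip: exp_add)
  have "exp (-2) * B \<le> A"
    unfolding A_def B_def sum_distrib_left
  proof (rule sum_mono)
    fix i assume "i \<in> I"
    then show "exp (-2) * (p i * exp (-2 * (1 - g i)\<^sup>2)) \<le> p i * exp (-2 * (g i)\<^sup>2)"
      using p_nonneg g01 unfolding ratio[of i] by (simp add: mult_left_mono mult.left_commute)
  qed
  moreover have "A \<le> exp 2 * B"
    unfolding A_def B_def sum_distrib_left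
  proof (rule sum_mono)
    fix i assume "i \<in> I"
    then show "p i * exp (-2 * (g i)\<^sup>2) \<le> exp 2 * (p i * exp (-2 * (1 - g i)\<^sup>2))"
      using p_nonneg g01 unfolding ratio[of i] by (simp add: mult_left_mono mult.left_commute)
  qed
  ultimately have lower: "exp (-2) \<le> A / B" and upper: "A / B \<le> exp 2"
    using B by (simp_all add: field_simps)
  have "-2 \<le> ln (A / B)"
    using lower A B by (simp add: ln_ge_iff)
  moreover have "ln (A / B) \<le> 2"
    using ln_mono[OF upper] A B by simp
  ultimately show "0 \<le> substitution I p g" "substitution I p g \<le> 1"
    unfolding substitution_def A_def[symmetric] B_def[symmetric] by linarith+
qed

lemma substitution_square_loss_le:
  assumes g01: "\<And>i. i \<in> I \<Longrightarrow> 0 \<le> g i \<and> g i \<le> 1" and \<omega>: "\<omega> = 0 \<or> \<omega> = 1"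
  shows "(substitution I p g - \<omega>)\<^sup>2 \<le> -(1/2) * ln (\<Sum>i\<in>I. p i * exp (-2 * (g i - \<omega>)\<^sup>2))"
proof -
  define A where "A = (\<Sum>i\<in>I. p i * exp (-2 * (g i)\<^sup>2))"
  define B where "B = (\<Sum>i\<in>I. p i * exp (-2 * (1 - g i)\<^sup>2))"
  define \<gamma> where "\<gamma> = substitution I p g"
  have bounds: "0 < A" "0 < B" "0 \<le> \<gamma>" "\<gamma> \<le> 1"
    using substitution_bounds[of g, OF g01] unfolding A_def B_def \<gamma>_def by simp_all
  have "A / B = exp (2 - 4 * \<gamma>)"
    using bounds(1,2) by (simp add: \<gamma>_def substitution_def A_def B_def)
  \<comment> \<open>The choice of \<gamma> balances the two outcomes, so one Hoeffding bound covers both.\<close>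
  then have balance: "exp (2 * (1 - \<gamma>)\<^sup>2) * B = exp (2 * \<gamma>\<^sup>2) * A"
    using bounds(2) by (simp add: field_simps power2_eq_square flip: exp_add)
  have "(\<Sum>i\<in>I. p i * ((1 - \<gamma>) * exp (2 * \<gamma>\<^sup>2 - 2 * (g i)\<^sup>2)
                         + \<gamma> * exp (2 * (1 - \<gamma>)\<^sup>2 - 2 * (1 - g i)\<^sup>2))) \<le> (\<Sum>i\<in>I. p i * 1)"
    using p_nonneg bounds(3,4)
    by (intro sum_mono mult_left_mono exp_square_loss_mixture_le_one) auto
  also have "(\<Sum>i\<in>I. p i * ((1 - \<gamma>) * exp (2 * \<gamma>\<^sup>2 - 2 * (g i)\<^sup>2)
                         + \<gamma> * exp (2 * (1 - \<gamma>)\<^sup>2 - 2 * (1 - g i)\<^sup>2)))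
      = (1 - \<gamma>) * (exp (2 * \<gamma>\<^sup>2) * A) + \<gamma> * (exp (2 * (1 - \<gamma>)\<^sup>2) * B)"
    unfolding A_def B_def sum_distrib_left sum.distrib[symmetric]
    by (intro sum.cong refl) (simp add: exp_diff exp_minus field_simps)
  finally have "exp (2 * \<gamma>\<^sup>2) * A \<le> 1" "exp (2 * (1 - \<gamma>)\<^sup>2) * B \<le> 1"
    unfolding balance using sum_p by (simp_all add: algebra_simps)
  moreover have le_neg_ln: "c \<le> - ln X" if "0 < X" "exp c * X \<le> 1" for c X :: real
    using ln_mono[OF that(2)] that(1) by (simp add: ln_mult)
  ultimately have "2 * \<gamma>\<^sup>2 \<le> - ln A" "2 * (1 - \<gamma>)\<^sup>2 \<le> - ln B"
    using bounds(1,2) by simp_all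
  then show ?thesis
    using \<omega> by (auto simp: \<gamma>_def A_def B_def power2_commute)
qed

lemma mono_on_substitution:
  assumes mono: "\<And>i. i \<in> I \<Longrightarrow> mono_on S (G i)"
    and G01: "\<And>i u. i \<in> I \<Longrightarrow> u \<in> S \<Longrightarrow> 0 \<le> G i u \<and> G i u \<le> 1"
  shows "mono_on S (\<lambda>u. substitution I p (\<lambda>i. G i u))"
proof (rule mono_onI)
  fix u v assume u: "u \<in> S" and v: "v \<in> S" and "u \<le> v"
  then have le: "G i u \<le> G i v" if "i \<in> I" for i
    using mono[OF that] by (auto dest: mono_onD)
  define A where "A w = (\<Sum>i\<in>I. p i * exp (-2 * (G i w)\<^sup>2))" for w
  define B where "B w = (\<Sum>i\<in>I. p i * exp (-2 * (1 - G i w)\<^sup>2))" for w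
  have pos: "0 < A w" "0 < B w" if "w \<in> S" for w
    using substitution_bounds[of "\<lambda>i. G i w"] G01 that unfolding A_def B_def by auto
  have "A v \<le> A u"
    unfolding A_def using p_nonneg le G01[OF _ u]
    by (intro sum_mono mult_left_mono) (auto intro!: power_mono)
  moreover have "B u \<le> B v"
    unfolding B_def using p_nonneg le G01[OF _ v]
    by (intro sum_mono mult_left_mono) (auto intro!: power_mono)
  ultimately have "A v / B v \<le> A u / B u"
    using pos[OF u] pos[OF v] by (intro frac_le) auto
  then have "ln (A v / B v) \<le> ln (A u / B u)"
    using pos[OF v] by (intro ln_mono) auto
  then show "substitution I p (\<lambda>i. G i u) \<le> substitution I p (\<lambda>i. G i v)"
    unfolding substitution_def A_def B_def by simp
qed

lemma ln_sum_exp_ge_tilted: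
  fixes x d :: "'i \<Rightarrow> real" and \<eta> :: real
  defines "Z \<equiv> \<Sum>i\<in>I. p i * exp (- \<eta> * d i)"
  shows "ln Z - \<eta> * (\<Sum>i\<in>I. p i * exp (- \<eta> * d i) / Z * (x i - d i))
           \<le> ln (\<Sum>i\<in>I. p i * exp (- \<eta> * x i))"
proof -
  define q where "q i = p i * exp (- \<eta> * d i) / Z" for i
  define S where "S = (\<Sum>i\<in>I. p i * exp (- \<eta> * x i))"
  have Z: "0 < Z" and S: "0 < S"
    unfolding Z_def S_def by (auto intro: weighted_sum_pos)
  have q_nonneg: "0 \<le> q i" if "i \<in> I" for i
    using p_nonneg[OF that] Z by (simp add: q_def)
  have sum_q: "sum q I = 1"
    using Z by (simp add: q_def Z_def flip: sum_divide_distrib)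
  have "I \<noteq> {}"
    using sum_p by auto
  then have "exp (\<Sum>i\<in>I. q i * (- \<eta> * (x i - d i))) \<le> (\<Sum>i\<in>I. q i * exp (- \<eta> * (x i - d i)))"
    using convex_on_sum[OF finite_I _ exp_convex sum_q q_nonneg, of "\<lambda>i. - \<eta> * (x i - d i)"]
    by simp
  also have "\<dots> = S / Z"
    unfolding S_def q_def sum_divide_distrib
    by (intro sum.cong refl) (simp add: algebra_simps flip: exp_add)
  finally have "(\<Sum>i\<in>I. q i * (- \<eta> * (x i - d i))) \<le> ln (S / Z)"
    using S Z by (simp add: ln_ge_iff)
  also have "\<dots> = ln S - ln Z"
    using S Z by (simp add: ln_div)
  finally have "(\<Sum>i\<in>I. q i * (- \<eta> * (x i - d i))) \<le> ln S - ln Z" .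
  moreover have "(\<Sum>i\<in>I. q i * (- \<eta> * (x i - d i))) = - \<eta> * (\<Sum>i\<in>I. q i * (x i - d i))"
    by (simp add: sum_distrib_left mult.left_commute)
  ultimately show ?thesis
    unfolding S_def q_def by linarith
qed

lemma integral_le_neg_ln_mixture:
  fixes f :: "real \<Rightarrow> real" and loss :: "'i \<Rightarrow> real \<Rightarrow> real"
  assumes "a < b" "0 < \<eta>" and f: "f integrable_on {a..b}"
    and loss: "\<And>i. i \<in> I \<Longrightarrow> (loss i has_integral c i) {a..b}"
    and f_le: "\<And>u. u \<in> {a..b} \<Longrightarrow> f u \<le> -(1/\<eta>) * ln (\<Sum>i\<in>I. p i * exp (- \<eta> * loss i u))"
  shows "integral {a..b} f \<le> -((b - a) / \<eta>) * ln (\<Sum>i\<in>I. p i * exp (- \<eta> * (c i / (b - a))))"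
proof -
  define d where "d i = c i / (b - a)" for i
  define Z where "Z = (\<Sum>i\<in>I. p i * exp (- \<eta> * d i))"
  define q where "q i = p i * exp (- \<eta> * d i) / Z" for i
  \<comment> \<open>R is the tangent bound, affine in the losses, so it integrates exactly.\<close>
  define R where "R u = -(1/\<eta>) * ln Z + (\<Sum>i\<in>I. q i * (loss i u - d i))" for u
  have const: "((\<lambda>u. k) has_integral k * (b - a)) {a..b}" for k
    using has_integral_const_real[of k a b] \<open>a < b\<close> by (simp add: mult.commute)
  have "(R has_integral -(1/\<eta>) * ln Z * (b - a) + (\<Sum>i\<in>I. q i * (c i - d i * (b - a)))) {a..b}"
    unfolding R_def using loss
    by (intro has_integral_add const has_integral_sum[OF finite_I] has_integral_mult_right
        has_integral_diff) auto
  moreover have "-(1/\<eta>) * ln Z * (b - a) + (\<Sum>i\<in>I. q i * (c i - d i * (b - a))) = -((b - a) / \<eta>) * ln Z"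
    using \<open>a < b\<close> by (simp add: d_def)
  moreover have "f u \<le> R u" if "u \<in> {a..b}" for u
    using f_le[OF that] ln_sum_exp_ge_tilted[of \<eta> d "\<lambda>i. loss i u"] \<open>0 < \<eta>\<close>
    unfolding R_def q_def Z_def by (simp add: field_simps)
  ultimately have "integral {a..b} f \<le> -((b - a) / \<eta>) * ln Z"
    using has_integral_le[OF integrable_integral[OF f]] by metis
  then show ?thesis
    by (simp add: Z_def d_def)
qed

lemma CRPS_substitution_le:
  assumes "a < b" and pdf: "\<And>i. i \<in> I \<Longrightarrow> pdf_on a b (G i)"
  shows "CRPS a b (\<lambda>u. substitution I p (\<lambda>i. G i u)) y
           \<le> -((b - a) / 2) * ln (\<Sum>i\<in>I. p i * exp (- (2 / (b - a)) * CRPS a b (G i) y))"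
proof -
  define h where "h u = heaviside (u - y)" for u
  have G_mono: "mono_on {a..b} (G i)" and G01: "\<And>u. u \<in> {a..b} \<Longrightarrow> 0 \<le> G i u \<and> G i u \<le> 1"
    if "i \<in> I" for i
    using pdf[OF that] by (auto simp: pdf_on_def)
  have "(\<lambda>u. (substitution I p (\<lambda>i. G i u) - h u)\<^sup>2) integrable_on {a..b}"
    unfolding h_def using G_mono G01
    by (intro integrable_CRPS_integrand mono_on_substitution substitution_bounds) auto
  moreover have "((\<lambda>u. (G i u - h u)\<^sup>2) has_integral CRPS a b (G i) y) {a..b}" if "i \<in> I" for i
    using integrable_CRPS_integrand[OF G_mono[OF that]] G01[OF that]
    by (simp add: CRPS_def h_def integrable_integral)
  moreover have "(substitution I p (\<lambda>i. G i u) - h u)\<^sup>2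
      \<le> -(1/2) * ln (\<Sum>i\<in>I. p i * exp (- 2 * (G i u - h u)\<^sup>2))" if "u \<in> {a..b}" for u
    using G01 that by (intro substitution_square_loss_le) (auto simp: h_def heaviside_def)
  ultimately have "integral {a..b} (\<lambda>u. (substitution I p (\<lambda>i. G i u) - h u)\<^sup>2)
      \<le> -((b - a) / 2) * ln (\<Sum>i\<in>I. p i * exp (- 2 * (CRPS a b (G i) y / (b - a))))"
    using \<open>a < b\<close> by (intro integral_le_neg_ln_mixture) auto
  then show ?thesis
    by (simp add: CRPS_def h_def)
qed

end

definition total_weight :: "real \<Rightarrow> real \<Rightarrow> nat \<Rightarrow> (nat \<Rightarrow> nat \<Rightarrow> real \<Rightarrow> real) \<Rightarrow> (nat \<Rightarrow> real)
    \<Rightarrow> nat \<Rightarrow> real" where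
  "total_weight a b N F y t = (\<Sum>j=1..N. weight a b N F y j t)"

lemma learner_eq_substitution:
  "learner a b N F y t = (\<lambda>u. substitution {1..N} (\<lambda>i. nweight a b N F y i t) (\<lambda>i. F i t u))"
  by (simp add: fun_eq_iff learner_def substitution_def)

lemma weight_Suc_eq:
  "weight a b N F y i (Suc t) = exp (- (2 / (b - a)) * (\<Sum>s=1..t. CRPS a b (F i s) (y s))) / real N"
  by (induction t) (simp_all add: algebra_simps flip: exp_add)

lemma weight_pos: "1 \<le> N \<Longrightarrow> 0 < weight a b N F y i t"
  by (cases t) (simp_all add: weight_Suc_eq)

lemma total_weight_pos: "1 \<le> N \<Longrightarrow> 0 < total_weight a b N F y t"
  unfolding total_weight_def by (intro sum_pos) (auto intro: weight_pos)

lemma total_weight_1: "1 \<le> N \<Longrightarrow> total_weight a b N F y 1 = 1"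
  by (simp add: total_weight_def)

lemma weight_le_total_weight:
  assumes "1 \<le> N" "i \<in> {1..N}"
  shows "weight a b N F y i t \<le> total_weight a b N F y t"
  unfolding total_weight_def
  using assms(2) weight_pos[OF assms(1)] by (intro member_le_sum) (auto intro: less_imp_le)

lemma CRPS_learner_le:
  assumes "a < b" "1 \<le> N" "1 \<le> t" "\<forall>i\<in>{1..N}. pdf_on a b (F i t)"
  shows "CRPS a b (learner a b N F y t) (y t)
           \<le> (b - a) / 2 * (ln (total_weight a b N F y t) - ln (total_weight a b N F y (Suc t)))"
proof -
  define W where "W = total_weight a b N F y"
  have W: "0 < W t" "0 < W (Suc t)"
    using \<open>1 \<le> N\<close> by (simp_all add: W_def total_weight_pos)
  have nweight: "nweight a b N F y i t = weight a b N F y i t / W t" for i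
    by (simp add: nweight_def W_def total_weight_def)
  have "CRPS a b (learner a b N F y t) (y t)
      \<le> -((b - a) / 2) * ln (\<Sum>i=1..N. nweight a b N F y i t * exp (- (2 / (b - a)) * CRPS a b (F i t) (y t)))"
    unfolding learner_eq_substitution using assms W(1) weight_pos[OF \<open>1 \<le> N\<close>]
    by (intro CRPS_substitution_le)
       (auto simp: nweight less_imp_le W_def total_weight_def simp flip: sum_divide_distrib)
  also have "(\<Sum>i=1..N. nweight a b N F y i t * exp (- (2 / (b - a)) * CRPS a b (F i t) (y t)))
      = W (Suc t) / W t"
    using \<open>1 \<le> t\<close> unfolding nweight W_def total_weight_def sum_divide_distrib
    by (intro sum.cong refl) (auto simp: not_less_eq_eq elim!: Suc_le_D[THEN exE])
  also have "-((b - a) / 2) * ln (W (Suc t) / W t) = (b - a) / 2 * (ln (W t) - ln (W (Suc t)))"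
    using W by (simp add: ln_div algebra_simps)
  finally show ?thesis
    unfolding W_def .
qed

theorem theorem3:
  fixes a b :: real and N T :: nat
    and F :: "nat \<Rightarrow> nat \<Rightarrow> real \<Rightarrow> real" and y :: "nat \<Rightarrow> real"
  assumes "a < b" and "N \<ge> 1" and "T \<ge> 1"
    and "\<forall>i\<in>{1..N}. \<forall>t\<in>{1..T}. pdf_on a b (F i t)"
    and "\<forall>t\<in>{1..T}. y t \<in> {a..b}"
  shows "\<forall>i\<in>{1..N}.
    (\<Sum>t=1..T. CRPS a b (learner a b N F y t) (y t))
      \<le> (\<Sum>t=1..T. CRPS a b (F i t) (y t)) + (b - a) / 2 * ln (real N)"
proof
  fix k assume k: "k \<in> {1..N}"
  define W where "W = total_weight a b N F y"
  have telescope: "(\<Sum>t=1..T. ln (W t) - ln (W (Suc t))) = ln (W 1) - ln (W (Suc T))"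
    using sum_Suc_diff[of 1 T "\<lambda>t. - ln (W t)"] \<open>T \<ge> 1\<close> by simp
  have "(\<Sum>t=1..T. CRPS a b (learner a b N F y t) (y t))
      \<le> (\<Sum>t=1..T. (b - a) / 2 * (ln (W t) - ln (W (Suc t))))"
    using assms unfolding W_def by (intro sum_mono CRPS_learner_le) auto
  also have "\<dots> = (b - a) / 2 * (ln (W 1) - ln (W (Suc T)))"
    by (simp only: telescope flip: sum_distrib_left)
  also have "\<dots> = - ((b - a) / 2) * ln (W (Suc T))"
    using total_weight_1[OF \<open>N \<ge> 1\<close>] by (simp add: W_def)
  also have "\<dots> \<le> - ((b - a) / 2) * ln (weight a b N F y k (Suc T))"
    using \<open>a < b\<close> \<open>N \<ge> 1\<close> k
    by (intro mult_left_mono_neg ln_mono) (auto simp: W_def weight_pos weight_le_total_weight)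
  also have "\<dots> = (\<Sum>t=1..T. CRPS a b (F k t) (y t)) + (b - a) / 2 * ln (real N)"
    using \<open>a < b\<close> \<open>N \<ge> 1\<close> by (simp add: weight_Suc_eq ln_div field_simps)
  finally show "(\<Sum>t=1..T. CRPS a b (learner a b N F y t) (y t))
      \<le> (\<Sum>t=1..T. CRPS a b (F k t) (y t)) + (b - a) / 2 * ln (real N)" .
qed

end
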